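(* Let $\mathfrak A=\langle A,f,g\rangle$ be a betweenness algebra. Then for all ultrafilters $\mathcal U,\mathcal U_1,\mathcal U_2,\mathcal U_3$ of $A$: (i) $Q_f(\mathcal U,\mathcal U,\mathcal U)$; (ii) $Q_f(\mathcal U_1,\mathcal U_2,\mathcal U_3)\Rightarrow Q_f(\mathcal U_3,\mathcal U_2,\mathcal U_1)$; (iii) $S_g(\mathcal U_1,\mathcal U_2,\mathcal U_3)\Rightarrow S_g(\mathcal U_3,\mathcal U_2,\mathcal U_1)$; (iv) $Q_f(\mathcal U_1,\mathcal U_2,\mathcal U_3)\Rightarrow Q_f(\mathcal U_1,\mathcal U_1,\mathcal U_2)$; (v) $Q_f(\mathcal U_1,\mathcal U_2,\mathcal U_3)\wedge S_g(\mathcal U_1,\mathcal U_3,\mathcal U_2)\Rightarrow \mathcal U_2=\mathcal U_3$. If $\mathfrak A$ is a strong betweenness algebra, then additionally $Q_f(\mathcal U_1,\mathcal U_1,\mathcal U_2)$ for all ultrafilters $\mathcal U_1,\mathcal U_2$. If $\mathfrak A$ is a weak betweenness algebra, then $S_g(\mathcal U_1,\mathcal U_2,\mathcal U_1)\Rightarrow\mathcal U_1=\mathcal U_2$ for all ultrafilters $\mathcal U_1,\mathcal U_2$.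
   Context: A PS-algebra is $\langle A,f,g\rangle$, $A$ a Boolean algebra with at least two elements (operations $+,\cdot,-,0,1$), $f,g\colon A^2\to A$, $f$ normal ($f(x,y)=0$ if $x=0$ or $y=0$) and additive in each argument, $g$ co-normal ($g(x,y)=1$ if $x=0$ or $y=0$) and co-additive in each argument ($g(x+x',y)=g(x,y)g(x',y)$, $g(x,y+y')=g(x,y)g(x,y')$). Axioms (for all $x,y,z,a,b$): (ABT0) $x\leq f(x,x)$; (ABT1$_f$) $f(x,y)\leq f(y,x)$; (ABT1$_g$) $g(x,y)\leq g(y,x)$; (ABT2) $y\cdot f(x,z)\leq f(x\cdot f(x,y),z)$; (ABT3) $f(x,g(x,-y)\cdot y)\leq y$; (wMIA) $x\neq0,y\neq0\Rightarrow g(x,y)\leq f(x,y)$; (ABTW) $a\neq0\Rightarrow g(a,a)\leq a$; (ABT2$^{\mathrm s}$) $b\neq0\Rightarrow a\leq f(a,b)$. Betweenness algebra: (ABT0),(ABT1$_f$),(ABT1$_g$),(ABT2),(ABT3),(wMIA). Weak betweenness algebra: (ABT0),(ABT1$_f$),(ABT1$_g$),(ABT2),(ABTW). Strong betweenness algebra: (ABT1$_f$),(ABT1$_g$),(ABT3),(wMIA),(ABT2$^{\mathrm s}$). On the ultrafilters of $A$: $Q_f(\mathcal U_1,\mathcal U_2,\mathcal U_3)\iff f[\mathcal U_1\times\mathcal U_3]\subseteq\mathcal U_2$ and $S_g(\mathcal U_1,\mathcal U_2,\mathcal U_3)\iff g[\mathcal U_1\times\mathcal U_3]\cap\mathcal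 U_2\neq\emptyset$. *)

theory Defs
  imports Main
begin

text \<open>Boolean algebras are the type class boolean_algebra (operations sup = +, inf = \<cdot>,
 uminus = -, bot = 0, top = 1).  f, g are binary operations on the carrier type.\<close>

definition PS_algebra :: "('a::boolean_algebra \<Rightarrow> 'a \<Rightarrow> 'a) \<Rightarrow> ('a \<Rightarrow> 'a \<Rightarrow> 'a) \<Rightarrow> bool" where
  "PS_algebra f g \<longleftrightarrow>
     (bot::'a) \<noteq> top \<and>
     (\<forall>x. f x bot = bot \<and> f bot x = bot) \<and>
     (\<forall>x x' y. f (sup x x') y = sup (f x y) (f x' y)) \<and>
     (\<forall>x y y'. f x (sup y y') = sup (f x y) (f x y')) \<and>
     (\<forall>x. g x bot = top \<and> g bot x = top) \<and>
     (\<forall>x x' y. g (sup x x') y = inf (g x y) (g x' y)) \<and>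
     (\<forall>x y y'. g x (sup y y') = inf (g x y) (g x y'))"

definition ABT0 :: "('a::boolean_algebra \<Rightarrow> 'a \<Rightarrow> 'a) \<Rightarrow> bool" where
  "ABT0 f \<longleftrightarrow> (\<forall>x. x \<le> f x x)"
definition ABT1 :: "('a::boolean_algebra \<Rightarrow> 'a \<Rightarrow> 'a) \<Rightarrow> bool" where
  "ABT1 h \<longleftrightarrow> (\<forall>x y. h x y \<le> h y x)"
definition ABT2 :: "('a::boolean_algebra \<Rightarrow> 'a \<Rightarrow> 'a) \<Rightarrow> bool" where
  "ABT2 f \<longleftrightarrow> (\<forall>x y z. inf y (f x z) \<le> f (inf x (f x y)) z)"
definition ABT3 :: "('a::boolean_algebra \<Rightarrow> 'a \<Rightarrow> 'a) \<Rightarrow> ('a \<Rightarrow> 'a \<Rightarrow> 'a) \<Rightarrow> bool" where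
  "ABT3 f g \<longleftrightarrow> (\<forall>x y. f x (inf (g x (- y)) y) \<le> y)"
definition wMIA :: "('a::boolean_algebra \<Rightarrow> 'a \<Rightarrow> 'a) \<Rightarrow> ('a \<Rightarrow> 'a \<Rightarrow> 'a) \<Rightarrow> bool" where
  "wMIA f g \<longleftrightarrow> (\<forall>x y. x \<noteq> bot \<and> y \<noteq> bot \<longrightarrow> g x y \<le> f x y)"
definition ABTW :: "('a::boolean_algebra \<Rightarrow> 'a \<Rightarrow> 'a) \<Rightarrow> bool" where
  "ABTW g \<longleftrightarrow> (\<forall>a. a \<noteq> bot \<longrightarrow> g a a \<le> a)"
definition ABT2s :: "('a::boolean_algebra \<Rightarrow> 'a \<Rightarrow> 'a) \<Rightarrow> bool" where
  "ABT2s f \<longleftrightarrow> (\<forall>a b. b \<noteq> bot \<longrightarrow> a \<le> f a b)"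

definition betweenness_algebra :: "('a::boolean_algebra \<Rightarrow> 'a \<Rightarrow> 'a) \<Rightarrow> ('a \<Rightarrow> 'a \<Rightarrow> 'a) \<Rightarrow> bool" where
  "betweenness_algebra f g \<longleftrightarrow> PS_algebra f g \<and> ABT0 f \<and> ABT1 f \<and> ABT1 g \<and> ABT2 f
     \<and> ABT3 f g \<and> wMIA f g"
definition weak_betweenness_algebra :: "('a::boolean_algebra \<Rightarrow> 'a \<Rightarrow> 'a) \<Rightarrow> ('a \<Rightarrow> 'a \<Rightarrow> 'a) \<Rightarrow> bool" where
  "weak_betweenness_algebra f g \<longleftrightarrow> PS_algebra f g \<and> ABT0 f \<and> ABT1 f \<and> ABT1 g \<and> ABT2 f
     \<and> ABTW g"
definition strong_betweenness_algebra :: "('a::boolean_algebra \<Rightarrow> 'a \<Rightarrow> 'a) \<Rightarrow> ('a \<Rightarrow> 'a \<Rightarrow> 'a) \<Rightarrow> bool" where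
  "strong_betweenness_algebra f g \<longleftrightarrow> PS_algebra f g \<and> ABT1 f \<and> ABT1 g \<and> ABT3 f g
     \<and> wMIA f g \<and> ABT2s f"

definition ultrafilter :: "'a::boolean_algebra set \<Rightarrow> bool" where
  "ultrafilter U \<longleftrightarrow> top \<in> U \<and> bot \<notin> U \<and>
     (\<forall>x y. x \<in> U \<and> x \<le> y \<longrightarrow> y \<in> U) \<and>
     (\<forall>x y. x \<in> U \<and> y \<in> U \<longrightarrow> inf x y \<in> U) \<and>
     (\<forall>x. x \<in> U \<or> - x \<in> U)"

definition Q_f :: "('a::boolean_algebra \<Rightarrow> 'a \<Rightarrow> 'a) \<Rightarrow> 'a set \<Rightarrow> 'a set \<Rightarrow> 'a set \<Rightarrow> bool" where
  "Q_f f U1 U2 U3 \<longleftrightarrow> (\<lambda>(x, y). f x y) ` (U1 \<times> U3) \<subseteq> U2"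
definition S_g :: "('a::boolean_algebra \<Rightarrow> 'a \<Rightarrow> 'a) \<Rightarrow> 'a set \<Rightarrow> 'a set \<Rightarrow> 'a set \<Rightarrow> bool" where
  "S_g g U1 U2 U3 \<longleftrightarrow> (\<lambda>(x, y). g x y) ` (U1 \<times> U3) \<inter> U2 \<noteq> {}"

end

theory Submission
  imports Defs
begin

text \<open>Every clause transfers one axiom to ultrafilters: an inequality between terms in \<open>f\<close>
  and \<open>g\<close> moves membership upwards along an ultrafilter.  Clauses (iv) and (v) argue by
  contradiction, using that an ultrafilter contains exactly one of \<open>x\<close> and \<open>-x\<close>; clause (v)
  and the clause for weak algebras then conclude by maximality, since an ultrafilter contained
  in another one equals it.\<close>

lemma ultrafilter_upward: "ultrafilter U \<Longrightarrow> x \<in> U \<Longrightarrow> x \<le> y \<Longrightarrow> y \<in> U"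
  unfolding ultrafilter_def by blast

lemma ultrafilter_inf: "ultrafilter U \<Longrightarrow> x \<in> U \<Longrightarrow> y \<in> U \<Longrightarrow> inf x y \<in> U"
  unfolding ultrafilter_def by blast

lemma ultrafilter_top: "ultrafilter U \<Longrightarrow> top \<in> U"
  unfolding ultrafilter_def by blast

lemma ultrafilter_not_bot: "ultrafilter U \<Longrightarrow> x \<in> U \<Longrightarrow> x \<noteq> bot"
  unfolding ultrafilter_def by blast

lemma ultrafilter_compl_iff: "ultrafilter U \<Longrightarrow> - x \<in> U \<longleftrightarrow> x \<notin> U"
  using ultrafilter_inf[of U x "- x"] ultrafilter_not_bot[of U]
  unfolding ultrafilter_def by auto

lemma ultrafilter_subset_eq:
  assumes "ultrafilter U" "ultrafilter V" "U \<subseteq> V"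
  shows "U = V"
  using assms ultrafilter_compl_iff by blast

lemma PS_algebra_f_mono_left: "PS_algebra f g \<Longrightarrow> x \<le> x' \<Longrightarrow> f x y \<le> f x' y"
  unfolding PS_algebra_def by (metis sup.absorb_iff2 sup.cobounded1)

lemma PS_algebra_f_mono_right: "PS_algebra f g \<Longrightarrow> y \<le> y' \<Longrightarrow> f x y \<le> f x y'"
  unfolding PS_algebra_def by (metis sup.absorb_iff2 sup.cobounded1)

lemma PS_algebra_g_antimono_left: "PS_algebra f g \<Longrightarrow> x \<le> x' \<Longrightarrow> g x' y \<le> g x y"
  unfolding PS_algebra_def by (metis sup.absorb_iff2 inf.cobounded1)

lemma PS_algebra_g_antimono_right: "PS_algebra f g \<Longrightarrow> y \<le> y' \<Longrightarrow> g x y' \<le> g x y"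
  unfolding PS_algebra_def by (metis sup.absorb_iff2 inf.cobounded1)

lemma PS_algebra_f_bot_left: "PS_algebra f g \<Longrightarrow> f bot y = bot"
  unfolding PS_algebra_def by blast

lemma Q_fI: "(\<And>x y. x \<in> U1 \<Longrightarrow> y \<in> U3 \<Longrightarrow> f x y \<in> U2) \<Longrightarrow> Q_f f U1 U2 U3"
  unfolding Q_f_def by auto

lemma Q_fD: "Q_f f U1 U2 U3 \<Longrightarrow> x \<in> U1 \<Longrightarrow> y \<in> U3 \<Longrightarrow> f x y \<in> U2"
  unfolding Q_f_def by auto

lemma S_g_iff: "S_g g U1 U2 U3 \<longleftrightarrow> (\<exists>x\<in>U1. \<exists>y\<in>U3. g x y \<in> U2)"
  unfolding S_g_def by auto

lemma Q_f_refl: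
  assumes "PS_algebra f g" "ABT0 f" "ultrafilter U"
  shows "Q_f f U U U"
proof (rule Q_fI)
  fix x y assume "x \<in> U" "y \<in> U"
  define z where "z = inf x y"
  have "z \<in> U" using ultrafilter_inf \<open>x \<in> U\<close> \<open>y \<in> U\<close> assms(3) unfolding z_def by blast
  have "z \<le> f z z" using \<open>ABT0 f\<close> unfolding ABT0_def by blast
  also have "\<dots> \<le> f x z" by (rule PS_algebra_f_mono_left[OF assms(1)]) (simp add: z_def)
  also have "\<dots> \<le> f x y" by (rule PS_algebra_f_mono_right[OF assms(1)]) (simp add: z_def)
  finally show "f x y \<in> U" using ultrafilter_upward[OF assms(3) \<open>z \<in> U\<close>] by blast
qed

lemma Q_f_swap:
  assumes "ABT1 f" "ultrafilter U2" "Q_f f U1 U2 U3"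
  shows "Q_f f U3 U2 U1"
proof (rule Q_fI)
  fix x y assume "x \<in> U3" "y \<in> U1"
  then have "f y x \<in> U2" using Q_fD[OF assms(3)] by blast
  moreover have "f y x \<le> f x y" using \<open>ABT1 f\<close> unfolding ABT1_def by blast
  ultimately show "f x y \<in> U2" using ultrafilter_upward[OF assms(2)] by blast
qed

lemma S_g_swap:
  assumes "ABT1 g" "ultrafilter U2" "S_g g U1 U2 U3"
  shows "S_g g U3 U2 U1"
proof -
  obtain x y where "x \<in> U1" "y \<in> U3" "g x y \<in> U2" using assms(3) unfolding S_g_iff by blast
  moreover have "g x y \<le> g y x" using \<open>ABT1 g\<close> unfolding ABT1_def by blast
  ultimately show ?thesis unfolding S_g_iff using ultrafilter_upward[OF assms(2)] by blast
qed

lemma Q_f_shift: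
  assumes "PS_algebra f g" "ABT2 f" "ultrafilter U1" "ultrafilter U2" "ultrafilter U3"
    and Q: "Q_f f U1 U2 U3"
  shows "Q_f f U1 U1 U2"
proof (rule Q_fI)
  fix x y assume x: "x \<in> U1" and y: "y \<in> U2"
  show "f x y \<in> U1"
  proof (rule ccontr)
    assume "f x y \<notin> U1"
    txt \<open>\<open>w\<close> is disjoint from \<open>f w y\<close>, so ABT2 with \<open>x := w\<close>, \<open>z := top\<close> forces
      \<open>inf y (f w top)\<close>, an element of \<open>U2\<close>, below \<open>f bot top = bot\<close>.\<close>
    define w where "w = inf x (- f x y)"
    have "w \<in> U1"
      using ultrafilter_inf ultrafilter_compl_iff \<open>f x y \<notin> U1\<close> x assms(3) unfolding w_def by blast
    have "f w y \<le> f x y" by (rule PS_algebra_f_mono_left[OF assms(1)]) (simp add: w_def)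
    then have w_disjoint: "inf w (f w y) = bot"
      unfolding w_def by (metis inf.assoc inf.orderE inf_compl_bot_right inf_bot_right inf_commute)
    have "inf y (f w top) \<in> U2"
      using Q_fD[OF Q \<open>w \<in> U1\<close> ultrafilter_top[OF assms(5)]] ultrafilter_inf[OF assms(4) y] by blast
    moreover have "inf y (f w top) \<le> f (inf w (f w y)) top"
      using \<open>ABT2 f\<close> unfolding ABT2_def by blast
    ultimately have "f bot top \<in> U2"
      using ultrafilter_upward[OF assms(4)] w_disjoint by metis
    then show False
      using ultrafilter_not_bot[OF assms(4)] PS_algebra_f_bot_left[OF assms(1)] by metis
  qed
qed

lemma Q_f_S_g_eq:
  assumes "PS_algebra f g" "ABT3 f g" "ultrafilter U2" "ultrafilter U3"
    and Q: "Q_f f U1 U2 U3" and S: "S_g g U1 U3 U2"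
  shows "U2 = U3"
proof -
  obtain x y where x: "x \<in> U1" and y: "y \<in> U2" and gxy: "g x y \<in> U3"
    using S unfolding S_g_iff by blast
  have "U3 \<subseteq> U2"
  proof
    fix a assume "a \<in> U3"
    show "a \<in> U2"
    proof (rule ccontr)
      assume "a \<notin> U2"
      txt \<open>ABT3 at \<open>- y'\<close> puts \<open>- y'\<close> into \<open>U2\<close>, next to \<open>y'\<close>.\<close>
      define y' where "y' = inf y (- a)"
      have "y' \<in> U2"
        using ultrafilter_inf ultrafilter_compl_iff \<open>a \<notin> U2\<close> y assms(3) unfolding y'_def by blast
      have "g x y \<le> g x (- (- y'))"
        by (rule PS_algebra_g_antimono_right[OF assms(1)]) (simp add: y'_def)
      moreover have "a \<le> - y'" by (simp add: y'_def)
      ultimately have "inf (g x (- (- y'))) (- y') \<in> U3"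
        using ultrafilter_upward[OF assms(4)] ultrafilter_inf[OF assms(4)] gxy \<open>a \<in> U3\<close> by blast
      then have "f x (inf (g x (- (- y'))) (- y')) \<in> U2" using Q_fD[OF Q x] by blast
      moreover have "f x (inf (g x (- (- y'))) (- y')) \<le> - y'"
        using \<open>ABT3 f g\<close> unfolding ABT3_def by blast
      ultimately have "- y' \<in> U2" using ultrafilter_upward[OF assms(3)] by blast
      then show False using \<open>y' \<in> U2\<close> ultrafilter_compl_iff[OF assms(3)] by blast
    qed
  qed
  then show ?thesis using ultrafilter_subset_eq assms(3,4) by blast
qed

lemma Q_f_shift_of_ABT2s:
  assumes "ABT2s f" "ultrafilter U1" "ultrafilter U2"
  shows "Q_f f U1 U1 U2"
proof (rule Q_fI)
  fix x y assume "x \<in> U1" "y \<in> U2"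
  then have "x \<le> f x y" using \<open>ABT2s f\<close> ultrafilter_not_bot[OF assms(3)] unfolding ABT2s_def by blast
  then show "f x y \<in> U1" using ultrafilter_upward[OF assms(2) \<open>x \<in> U1\<close>] by blast
qed

lemma S_g_diag_eq:
  assumes "PS_algebra f g" "ABTW g" "ultrafilter U1" "ultrafilter U2" "S_g g U1 U2 U1"
  shows "U1 = U2"
proof -
  obtain x z where "x \<in> U1" "z \<in> U1" and gxz: "g x z \<in> U2"
    using assms(5) unfolding S_g_iff by blast
  have "U1 \<subseteq> U2"
  proof
    fix b assume "b \<in> U1"
    define a where "a = inf (inf x z) b"
    have "a \<in> U1" using ultrafilter_inf[OF assms(3)] \<open>x \<in> U1\<close> \<open>z \<in> U1\<close> \<open>b \<in> U1\<close>
      unfolding a_def by blast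
    have "g x z \<le> g a z" by (rule PS_algebra_g_antimono_left[OF assms(1)]) (simp add: a_def le_infI1)
    also have "\<dots> \<le> g a a" by (rule PS_algebra_g_antimono_right[OF assms(1)]) (simp add: a_def le_infI1)
    also have "\<dots> \<le> a" using \<open>ABTW g\<close> ultrafilter_not_bot[OF assms(3) \<open>a \<in> U1\<close>] unfolding ABTW_def by blast
    also have "\<dots> \<le> b" unfolding a_def by simp
    finally show "b \<in> U2" using ultrafilter_upward[OF assms(4) gxz] by blast
  qed
  then show ?thesis using ultrafilter_subset_eq assms(3,4) by blast
qed

theorem lemma41:
  fixes f g :: "'a::boolean_algebra \<Rightarrow> 'a \<Rightarrow> 'a"
  shows
  "(betweenness_algebra f g \<longrightarrow>
     (\<forall>U. ultrafilter U \<longrightarrow> Q_f f U U U) \<and>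
     (\<forall>U1 U2 U3. ultrafilter U1 \<and> ultrafilter U2 \<and> ultrafilter U3 \<longrightarrow>
        (Q_f f U1 U2 U3 \<longrightarrow> Q_f f U3 U2 U1) \<and>
        (S_g g U1 U2 U3 \<longrightarrow> S_g g U3 U2 U1) \<and>
        (Q_f f U1 U2 U3 \<longrightarrow> Q_f f U1 U1 U2) \<and>
        (Q_f f U1 U2 U3 \<and> S_g g U1 U3 U2 \<longrightarrow> U2 = U3))) \<and>
   (strong_betweenness_algebra f g \<longrightarrow>
     (\<forall>U1 U2. ultrafilter U1 \<and> ultrafilter U2 \<longrightarrow> Q_f f U1 U1 U2)) \<and>
   (weak_betweenness_algebra f g \<longrightarrow>
     (\<forall>U1 U2. ultrafilter U1 \<and> ultrafilter U2 \<longrightarrow> S_g g U1 U2 U1 \<longrightarrow> U1 = U2))"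
proof (intro conjI impI allI)
  assume "betweenness_algebra f g"
  then have "PS_algebra f g" "ABT0 f" "ABT1 f" "ABT1 g" "ABT2 f" "ABT3 f g"
    unfolding betweenness_algebra_def by auto
  note axioms = this
  show "ultrafilter U \<Longrightarrow> Q_f f U U U" for U using Q_f_refl axioms by blast
  fix U1 U2 U3 :: "'a set" assume "ultrafilter U1 \<and> ultrafilter U2 \<and> ultrafilter U3"
  then have ufs: "ultrafilter U1" "ultrafilter U2" "ultrafilter U3" by auto
  show "Q_f f U1 U2 U3 \<Longrightarrow> Q_f f U3 U2 U1" using Q_f_swap axioms ufs by blast
  show "S_g g U1 U2 U3 \<Longrightarrow> S_g g U3 U2 U1" using S_g_swap axioms ufs by blast
  show "Q_f f U1 U2 U3 \<Longrightarrow> Q_f f U1 U1 U2" using Q_f_shift axioms ufs by blast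
  show "Q_f f U1 U2 U3 \<and> S_g g U1 U3 U2 \<Longrightarrow> U2 = U3" using Q_f_S_g_eq axioms ufs by blast
next
  fix U1 U2 :: "'a set"
  show "strong_betweenness_algebra f g \<Longrightarrow> ultrafilter U1 \<and> ultrafilter U2 \<Longrightarrow> Q_f f U1 U1 U2"
    using Q_f_shift_of_ABT2s unfolding strong_betweenness_algebra_def by blast
  show "weak_betweenness_algebra f g \<Longrightarrow> ultrafilter U1 \<and> ultrafilter U2 \<Longrightarrow>
      S_g g U1 U2 U1 \<Longrightarrow> U1 = U2"
    using S_g_diag_eq unfolding weak_betweenness_algebra_def by blast
qed

end
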